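(* Let $T_W$ be a well-localized operator of radius $r$ acting formally from $L^2(W)$ to $L^2(V)$, and let $\Pi^W$ be the associated paraproduct. Let $I,J\in\mathcal{D}$ and $1\le i,j\le d$. (1) If $|J|\ge2^{-r}|I|$, then $\langle\Pi^Wh_I^{W,i},h_J^{V,j}\rangle_{L^2(V)}=0$. (2) If $|J|<2^{-r}|I|$, then $\langle\Pi^Wh_I^{W,i},h_J^{V,j}\rangle_{L^2(V)}=\langle T_Wh_I^{W,i},h_J^{V,j}\rangle_{L^2(V)}$; moreover if in addition $J\not\subset I$, both sides are zero. The analogous statements hold for $\Pi^V$ with $T_V^*$ in place of $T_W$ (roles of $V$ and $W$ exchanged).
   Context: Matrix weights $V,W$ (positive definite a.e., locally integrable entries), $L^2(W)$ with inner product $\int\langle Wf,g\rangle$, $W(I)=\int_IW$, $\langle W\rangle_I=W(I)/|I|$, $\mathcal{D}$ the standard dyadic grid, $I_\pm$ halves, $I^{(k)}$ the $k$-th ancestor. Weighted Haar functions: $v_J^1,\dots,v_J^d$ an orthonormal eigenbasis of the positive definite matrix $W(J)W(J_+)^{-1}W(J_-)$, $w_J^j=\|(W(J)W(J_+)^{-1}W(J_-))^{1/2}v_J^j\|$, $h_J^{W,j}=(w_J^j)^{-1}(W(J_+)^{-1}W(J_-)v_J^j\mathbf{1}_{J_+}-v_J^j\mathbf{1}_{J_-})$; same for $V$. Weighted expectation: $E_I^Wf=\langle W\rangle_I^{-1}\langle Wf\rangle_I\mathbf{1}_I$ where $\langle Wf\rangle_I=\frac1{|I|}\int_IWf$. Paraproducts: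 $\Pi^Wf=\sum_{I\in\mathcal{D}}\sum_{1\le j\le d}\sum_{J\subseteq I,|J|=2^{-r}|I|}\langle T_WE^W_If,h_J^{V,j}\rangle_{L^2(V)}h_J^{V,j}$ and $\Pi^Vg=\sum_{I}\sum_{j}\sum_{J\subseteq I,|J|=2^{-r}|I|}\langle T_V^*E^V_Ig,h_J^{W,j}\rangle_{L^2(W)}h_J^{W,j}$. $T_W$ acts formally from $L^2(W)$ to $L^2(V)$ if $\langle T_W\mathbf{1}_Ie,\mathbf{1}_Jv\rangle_{L^2(V)}$ is given for all dyadic $I,J$ and vectors (extended linearly); formal adjoint: $\langle T_V^*\mathbf{1}_Ie,\mathbf{1}_Jv\rangle_{L^2(W)}=\langle\mathbf{1}_Ie,T_W\mathbf{1}_Jv\rangle_{L^2(V)}$. $T_W$ is $r$-lower triangular if for $|J|\le2|I|$, $\langle T_W\mathbf{1}_Ie,h_J^{V,j}\rangle_{L^2(V)}=0$ whenever $J\not\subset I^{(r+1)}$, or $|J|\le2^{-r}|I|$ and $J\not\subset I$; well-localized with radius $r$ means $T_W$ and $T_V^*$ are both $r$-lower triangular. *)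

theory Defs
  imports "HOL-Analysis.Analysis"
begin

definition dyadic :: "real set set" where
  "dyadic = {{real_of_int k * 2 powr real_of_int n ..< (real_of_int k + 1) * 2 powr real_of_int n}
             | k n. True}"

definition dleft :: "real set \<Rightarrow> real set" where
  "dleft I = {Inf I ..< (Inf I + Sup I) / 2}"

definition dright :: "real set \<Rightarrow> real set" where
  "dright I = {(Inf I + Sup I) / 2 ..< Sup I}"

definition dlen :: "real set \<Rightarrow> real" where
  "dlen I = measure lborel I"

definition anc :: "nat \<Rightarrow> real set \<Rightarrow> real set" where
  "anc k I = (THE J. J \<in> dyadic \<and> I \<subseteq> J \<and> dlen J = 2 ^ k * dlen I)"

definition cinner :: "complex ^ 'n \<Rightarrow> complex ^ 'n \<Rightarrow> complex" where
  "cinner x y = (\<Sum>i\<in>UNIV. x $ i * cnj (y $ i))"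

definition hermitian :: "complex ^ 'n ^ 'n \<Rightarrow> bool" where
  "hermitian A \<longleftrightarrow> (\<forall>i j. A $ i $ j = cnj (A $ j $ i))"

definition posdef :: "complex ^ 'n ^ 'n \<Rightarrow> bool" where
  "posdef A \<longleftrightarrow> hermitian A \<and> (\<forall>x. x \<noteq> 0 \<longrightarrow> Re (cinner (A *v x) x) > 0)"

definition matrix_weight :: "(real \<Rightarrow> complex ^ 'n ^ 'n) \<Rightarrow> bool" where
  "matrix_weight W \<longleftrightarrow> (AE x in lborel. posdef (W x)) \<and>
     (\<forall>i j. \<forall>a b. set_integrable lborel {a..b} (\<lambda>x. W x $ i $ j))"

definition mint :: "(real \<Rightarrow> complex ^ 'n ^ 'n) \<Rightarrow> real set \<Rightarrow> complex ^ 'n ^ 'n" where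
  "mint W I = (\<chi> i j. LINT x:I|lborel. W x $ i $ j)"

definition mavg :: "(real \<Rightarrow> complex ^ 'n ^ 'n) \<Rightarrow> real set \<Rightarrow> complex ^ 'n ^ 'n" where
  "mavg W I = (\<chi> i j. complex_of_real (1 / dlen I) * mint W I $ i $ j)"

definition vavg :: "(real \<Rightarrow> complex ^ 'n ^ 'n) \<Rightarrow> (real \<Rightarrow> complex ^ 'n) \<Rightarrow> real set \<Rightarrow> complex ^ 'n" where
  "vavg W f I = (\<chi> i. complex_of_real (1 / dlen I) * (LINT x:I|lborel. (W x *v f x) $ i))"

definition l2ip :: "(real \<Rightarrow> complex ^ 'n ^ 'n) \<Rightarrow> (real \<Rightarrow> complex ^ 'n) \<Rightarrow> (real \<Rightarrow> complex ^ 'n) \<Rightarrow> complex" where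
  "l2ip W f g = (LINT x|lborel. cinner (W x *v f x) (g x))"

definition step_fun :: "(real set \<times> (complex ^ 'n)) list \<Rightarrow> real \<Rightarrow> complex ^ 'n" where
  "step_fun R x = sum_list (map (\<lambda>(I, e). (indicator I x :: complex) *s e) R)"

definition haar_mat :: "(real \<Rightarrow> complex ^ 'n ^ 'n) \<Rightarrow> real set \<Rightarrow> complex ^ 'n ^ 'n" where
  "haar_mat W J = mint W J ** matrix_inv (mint W (dright J)) ** mint W (dleft J)"

definition eigbasis :: "(real \<Rightarrow> complex ^ 'n ^ 'n) \<Rightarrow> (real set \<Rightarrow> 'n \<Rightarrow> complex ^ 'n) \<Rightarrow> bool" where
  "eigbasis W eb \<longleftrightarrow> (\<forall>J\<in>dyadic.
     (\<forall>i j. cinner (eb J i) (eb J j) = (if i = j then 1 else 0)) \<and>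
     (\<forall>j. \<exists>c. haar_mat W J *v eb J j = c *s eb J j))"

text \<open>w_J^j = || M^{1/2} v || = <M v, v>^{1/2} for the positive definite matrix M = haar_mat W J.\<close>
definition haar_norm :: "(real \<Rightarrow> complex ^ 'n ^ 'n) \<Rightarrow> (real set \<Rightarrow> 'n \<Rightarrow> complex ^ 'n) \<Rightarrow> real set \<Rightarrow> 'n \<Rightarrow> real" where
  "haar_norm W eb J j = sqrt (Re (cinner (haar_mat W J *v eb J j) (eb J j)))"

definition haar_rep :: "(real \<Rightarrow> complex ^ 'n ^ 'n) \<Rightarrow> (real set \<Rightarrow> 'n \<Rightarrow> complex ^ 'n) \<Rightarrow> real set \<Rightarrow> 'n \<Rightarrow> (real set \<times> (complex ^ 'n)) list" where
  "haar_rep W eb J j =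
     [(dright J, complex_of_real (1 / haar_norm W eb J j) *s
                 ((matrix_inv (mint W (dright J)) ** mint W (dleft J)) *v eb J j)),
      (dleft J, complex_of_real (- 1 / haar_norm W eb J j) *s eb J j)]"

definition haar :: "(real \<Rightarrow> complex ^ 'n ^ 'n) \<Rightarrow> (real set \<Rightarrow> 'n \<Rightarrow> complex ^ 'n) \<Rightarrow> real set \<Rightarrow> 'n \<Rightarrow> real \<Rightarrow> complex ^ 'n" where
  "haar W eb J j = step_fun (haar_rep W eb J j)"

definition wexp_rep :: "(real \<Rightarrow> complex ^ 'n ^ 'n) \<Rightarrow> real set \<Rightarrow> (real \<Rightarrow> complex ^ 'n) \<Rightarrow> (real set \<times> (complex ^ 'n)) list" where
  "wexp_rep W I f = [(I, matrix_inv (mavg W I) *v vavg W f I)]"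

text \<open>A formal operator T from L^2(W) to L^2(V) is given by its values
  tau I e J v = <T 1_I e, 1_J v>_{L^2(V)} for dyadic I, J, extended linearly.
  Well-definedness of the linear extension: linear in e, conjugate linear in v,
  and compatible with 1_I = 1_{I_-} + 1_{I_+} in both interval slots.\<close>
definition formal_op :: "(real set \<Rightarrow> complex ^ 'n \<Rightarrow> real set \<Rightarrow> complex ^ 'n \<Rightarrow> complex) \<Rightarrow> bool" where
  "formal_op tau \<longleftrightarrow> (\<forall>I\<in>dyadic. \<forall>J\<in>dyadic.
     (\<forall>a e e' v. tau I (a *s e + e') J v = a * tau I e J v + tau I e' J v) \<and>
     (\<forall>a e v v'. tau I e J (a *s v + v') = cnj a * tau I e J v + tau I e J v') \<and>
     (\<forall>e v. tau I e J v = tau (dleft I) e J v + tau (dright I) e J v) \<and>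
     (\<forall>e v. tau I e J v = tau I e (dleft J) v + tau I e (dright J) v))"

text \<open>Linear extension: <T (sum 1_I e), sum 1_J v>.\<close>
definition fpair :: "(real set \<Rightarrow> complex ^ 'n \<Rightarrow> real set \<Rightarrow> complex ^ 'n \<Rightarrow> complex) \<Rightarrow>
    (real set \<times> (complex ^ 'n)) list \<Rightarrow> (real set \<times> (complex ^ 'n)) list \<Rightarrow> complex" where
  "fpair tau R S = sum_list (map (\<lambda>(I, e). sum_list (map (\<lambda>(J, v). tau I e J v) S)) R)"

text \<open>Formal adjoint: <T^* 1_I e, 1_J v>_{L^2(W)} = <1_I e, T 1_J v>_{L^2(V)}.\<close>
definition fadj :: "(real set \<Rightarrow> complex ^ 'n \<Rightarrow> real set \<Rightarrow> complex ^ 'n \<Rightarrow> complex) \<Rightarrow>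
    (real set \<Rightarrow> complex ^ 'n \<Rightarrow> real set \<Rightarrow> complex ^ 'n \<Rightarrow> complex)" where
  "fadj tau I e J v = cnj (tau J v I e)"

definition lower_tri :: "nat \<Rightarrow> (real set \<Rightarrow> complex ^ 'n \<Rightarrow> real set \<Rightarrow> complex ^ 'n \<Rightarrow> complex) \<Rightarrow>
    (real \<Rightarrow> complex ^ 'n ^ 'n) \<Rightarrow> (real set \<Rightarrow> 'n \<Rightarrow> complex ^ 'n) \<Rightarrow> bool" where
  "lower_tri r tau B ebB \<longleftrightarrow> (\<forall>I\<in>dyadic. \<forall>J\<in>dyadic. \<forall>e j.
     dlen J \<le> 2 * dlen I \<longrightarrow>
     (\<not> J \<subseteq> anc (r + 1) I \<or> (dlen J \<le> dlen I / 2 ^ r \<and> \<not> J \<subseteq> I)) \<longrightarrow>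
     fpair tau [(I, e)] (haar_rep B ebB J j) = 0)"

definition well_localized :: "nat \<Rightarrow> (real set \<Rightarrow> complex ^ 'n \<Rightarrow> real set \<Rightarrow> complex ^ 'n \<Rightarrow> complex) \<Rightarrow>
    (real \<Rightarrow> complex ^ 'n ^ 'n) \<Rightarrow> (real set \<Rightarrow> 'n \<Rightarrow> complex ^ 'n) \<Rightarrow>
    (real \<Rightarrow> complex ^ 'n ^ 'n) \<Rightarrow> (real set \<Rightarrow> 'n \<Rightarrow> complex ^ 'n) \<Rightarrow> bool" where
  "well_localized r tau W ebW V ebV \<longleftrightarrow> lower_tri r tau V ebV \<and> lower_tri r (fadj tau) W ebW"

text \<open>For an operator Sg from L^2(A) to L^2(B), the paraproduct
  Pi f = sum_{I} sum_{j} sum_{J subset I, |J| = 2^{-r}|I|} <Sg E_I^A f, h_J^{B,j}> h_J^{B,j}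
  is a formal Haar series; para_pair gives <Pi f, h_J^{B,j}>_{L^2(B)} by pairing termwise.\<close>
definition para_pair :: "nat \<Rightarrow> (real set \<Rightarrow> complex ^ 'n \<Rightarrow> real set \<Rightarrow> complex ^ 'n \<Rightarrow> complex) \<Rightarrow>
    (real \<Rightarrow> complex ^ 'n ^ 'n) \<Rightarrow> (real \<Rightarrow> complex ^ 'n ^ 'n) \<Rightarrow> (real set \<Rightarrow> 'n \<Rightarrow> complex ^ 'n) \<Rightarrow>
    (real \<Rightarrow> complex ^ 'n) \<Rightarrow> real set \<Rightarrow> 'n \<Rightarrow> complex" where
  "para_pair r Sg A B ebB f J j =
     infsum (\<lambda>(I', j', J'). fpair Sg (wexp_rep A I' f) (haar_rep B ebB J' j') *
                            l2ip B (haar B ebB J' j') (haar B ebB J j))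
       {(I', j', J'). I' \<in> dyadic \<and> J' \<in> dyadic \<and> J' \<subseteq> I' \<and> dlen J' = dlen I' / 2 ^ r}"

end

theory Submission
  imports Defs
begin

text \<open>
  By orthonormality of the weighted Haar system, only one term of the formal Haar series
  Pi^W h_I^i survives when it is paired with h_J^j: the one with J' = J and I' = J^{(r)}, so
  <Pi^W h_I^i, h_J^j> = <T E_{J^{(r)}} h_I^i, h_J^j>.  The weighted expectation E_K h_I is the
  constant value of h_I on K when K lies in a half of I and vanishes otherwise.  If
  |J| \<ge> 2^{-r}|I|, then J^{(r)} is too long to lie in a half of I, which gives (1).  If
  |J| < 2^{-r}|I|, lower triangularity kills the pairing of h_J with every function 1_K c for
  long dyadic K not containing J; halving repeatedly shows that on the half of I containing
  J^{(r)} the operator only sees J^{(r)}, while the other half contributes nothing; this gives (2).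
\<close>

section \<open>Dyadic intervals\<close>

text \<open>Every dyadic interval is of the form dint k n = [k 2^n, (k+1) 2^n), and a point x lies in
  dint k n exactly when k is the integer part of x / 2^n.  This description reduces the nesting
  properties of the dyadic grid to the identity floor (y / 2^m) = floor y div 2^m.\<close>

definition dint :: "int \<Rightarrow> int \<Rightarrow> real set" where
  "dint k n = {real_of_int k * 2 powr real_of_int n ..< (real_of_int k + 1) * 2 powr real_of_int n}"

lemma dyadic_iff: "I \<in> dyadic \<longleftrightarrow> (\<exists>k n. I = dint k n)"
  unfolding dyadic_def dint_def by auto

lemma dint_lt: "real_of_int k * 2 powr real_of_int n < (real_of_int k + 1) * 2 powr real_of_int n"
  by (simp add: distrib_right)

lemma mem_dint: "x \<in> dint k n \<longleftrightarrow> \<lfloor>x / 2 powr real_of_int n\<rfloor> = k"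
proof -
  have "(2::real) powr real_of_int n > 0" by simp
  thus ?thesis
    unfolding dint_def floor_eq_iff by (simp add: pos_le_divide_eq pos_divide_less_eq)
qed

lemma floor_div_two_powr:
  "\<lfloor>x / 2 powr real_of_int (n + int m)\<rfloor> = \<lfloor>x / 2 powr real_of_int n\<rfloor> div 2 ^ m"
proof -
  have "x / 2 powr real_of_int (n + int m) = (x / 2 powr real_of_int n) / real_of_int (2 ^ m)"
    by (simp add: powr_add powr_realpow)
  also have "\<lfloor>\<dots>\<rfloor> = \<lfloor>x / 2 powr real_of_int n\<rfloor> div 2 ^ m"
    by (rule floor_divide_real_eq_div) simp
  finally show ?thesis .
qed

lemma two_powr_shift: "(2::real) powr real_of_int (n + int m) = 2 ^ m * 2 powr real_of_int n"
  by (simp add: powr_add powr_realpow)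

lemma dint_subset_parent: "dint k n \<subseteq> dint (k div 2 ^ m) (n + int m)"
  unfolding subset_iff mem_dint using floor_div_two_powr by metis

lemma dint_Inf: "Inf (dint k n) = real_of_int k * 2 powr real_of_int n"
  unfolding dint_def using dint_lt by (simp add: cInf_atLeastLessThan)

lemma dint_Sup: "Sup (dint k n) = (real_of_int k + 1) * 2 powr real_of_int n"
  unfolding dint_def using dint_lt by (simp add: cSup_atLeastLessThan)

lemma dlen_dint: "dlen (dint k n) = 2 powr real_of_int n"
  unfolding dlen_def dint_def using dint_lt by (simp add: algebra_simps)

lemma dleft_dint: "dleft (dint k n) = dint (2 * k) (n - 1)"
proof -
  have p: "(2::real) powr real_of_int n = 2 * 2 powr real_of_int (n - 1)"
    by (simp add: powr_diff)
  show ?thesis unfolding dleft_def dint_Inf dint_Sup unfolding dint_def p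
    by (rule arg_cong2[where f = atLeastLessThan]) (simp_all add: field_simps)
qed

lemma dright_dint: "dright (dint k n) = dint (2 * k + 1) (n - 1)"
proof -
  have p: "(2::real) powr real_of_int n = 2 * 2 powr real_of_int (n - 1)"
    by (simp add: powr_diff)
  show ?thesis unfolding dright_def dint_Inf dint_Sup unfolding dint_def p
    by (rule arg_cong2[where f = atLeastLessThan]) (simp_all add: field_simps)
qed

lemma dleft_dyadic: "I \<in> dyadic \<Longrightarrow> dleft I \<in> dyadic"
  using dleft_dint dyadic_iff by metis

lemma dright_dyadic: "I \<in> dyadic \<Longrightarrow> dright I \<in> dyadic"
  using dright_dint dyadic_iff by metis

lemma dyadic_ne: "I \<in> dyadic \<Longrightarrow> I \<noteq> {}"
  unfolding dyadic_iff dint_def using dint_lt by fastforce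

lemma dlen_pos: "I \<in> dyadic \<Longrightarrow> dlen I > 0"
  using dlen_dint dyadic_iff by fastforce

lemma dyadic_sets: "I \<in> dyadic \<Longrightarrow> I \<in> sets lborel"
  unfolding dyadic_iff dint_def by auto

lemma dyadic_bounded: "I \<in> dyadic \<Longrightarrow> \<exists>a b. I \<subseteq> {a..b}"
  unfolding dyadic_iff dint_def by (meson atLeastLessThan_subseteq_atLeastAtMost_iff order_refl)

lemma dyadic_fmeas: "J \<in> dyadic \<Longrightarrow> J \<in> fmeasurable lborel"
  unfolding dyadic_iff dint_def fmeasurable_def by auto

lemma dlen_mono: "I \<subseteq> J \<Longrightarrow> J \<in> dyadic \<Longrightarrow> I \<in> sets lborel \<Longrightarrow> dlen I \<le> dlen J"
  unfolding dlen_def using dyadic_fmeas measure_mono_fmeasurable by blast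

lemma halves_union:
  assumes "I \<in> dyadic"
  shows "I = dleft I \<union> dright I"
proof -
  obtain a b where ab: "I = {a..<b}" "a < b"
    using assms dint_lt unfolding dyadic_iff dint_def by blast
  hence "Inf I = a" "Sup I = b" by (simp_all add: cInf_atLeastLessThan cSup_atLeastLessThan)
  thus ?thesis unfolding dleft_def dright_def using ab by auto
qed

lemma halves_disj: "dleft I \<inter> dright I = {}"
  unfolding dleft_def dright_def by auto

lemma halves_sub: "I \<in> dyadic \<Longrightarrow> dleft I \<subseteq> I \<and> dright I \<subseteq> I"
  using halves_union by blast

lemma dlen_halves: "I \<in> dyadic \<Longrightarrow> dlen (dleft I) = dlen I / 2 \<and> dlen (dright I) = dlen I / 2"
  unfolding dyadic_iff using dleft_dint dright_dint dlen_dint by (auto simp: powr_diff)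

lemma dyadic_nest:
  assumes "I \<in> dyadic" "J \<in> dyadic" "I \<inter> J \<noteq> {}" "dlen I \<le> dlen J"
  shows "I \<subseteq> J"
proof -
  obtain k n k' n' where I: "I = dint k n" and J: "J = dint k' n'"
    using assms(1,2) dyadic_iff by metis
  define m where "m = nat (n' - n)"
  have "n \<le> n'" using assms(4) unfolding I J dlen_dint by simp
  hence n': "n' = n + int m" unfolding m_def by simp
  obtain x where "x \<in> dint k n" "x \<in> dint k' n'" using assms(3) unfolding I J by blast
  hence "k' = k div 2 ^ m" unfolding n' mem_dint floor_div_two_powr by simp
  thus ?thesis unfolding I J n' using dint_subset_parent by blast
qed

text \<open>Dyadic lengths are powers of 2, so a strictly shorter one is at most half as long.\<close>
lemma dlen_lt2: "I \<in> dyadic \<Longrightarrow> J \<in> dyadic \<Longrightarrow> dlen J < dlen I \<Longrightarrow> 2 * dlen J \<le> dlen I"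
proof -
  assume "I \<in> dyadic" "J \<in> dyadic" "dlen J < dlen I"
  then obtain k n k' n' where I: "I = dint k n" and J: "J = dint k' n'" and
     lt: "(2::real) powr real_of_int n' < 2 powr real_of_int n"
    using dyadic_iff dlen_dint by metis
  have "real_of_int n' + 1 \<le> real_of_int n" using lt by simp
  hence "(2::real) powr (real_of_int n' + 1) \<le> 2 powr real_of_int n" by simp
  thus ?thesis unfolding I J dlen_dint by (simp add: powr_add)
qed

lemma dyadic_eq:
  assumes "I \<in> dyadic" "J \<in> dyadic" "I \<subseteq> J" "dlen I = dlen J"
  shows "I = J"
proof -
  have "J \<inter> I \<noteq> {}" using assms(3) dyadic_ne[OF assms(1)] by blast
  hence "J \<subseteq> I" using dyadic_nest[OF assms(2,1)] assms(4) by simp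
  thus ?thesis using assms(3) by blast
qed

lemma sub_half:
  assumes "K \<in> dyadic" "I \<in> dyadic" "K \<subseteq> I" "K \<noteq> I"
  shows "K \<subseteq> dleft I \<or> K \<subseteq> dright I"
proof -
  have "dlen K \<le> dlen I" using assms dlen_mono dyadic_sets by blast
  moreover have "dlen K \<noteq> dlen I" using dyadic_eq assms by blast
  ultimately have "2 * dlen K \<le> dlen I" using dlen_lt2 assms by simp
  hence le: "dlen K \<le> dlen (dleft I)" "dlen K \<le> dlen (dright I)"
    using dlen_halves[OF assms(2)] by auto
  have "K \<inter> dleft I \<noteq> {} \<or> K \<inter> dright I \<noteq> {}"
    using dyadic_ne[OF assms(1)] assms(3) halves_union[OF assms(2)] by blast
  thus ?thesis
    using dyadic_nest[OF assms(1) dleft_dyadic[OF assms(2)] _ le(1)]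
      dyadic_nest[OF assms(1) dright_dyadic[OF assms(2)] _ le(2)] by blast
qed

lemma exists_len:
  assumes "I \<in> dyadic" "J \<in> dyadic" "I \<subseteq> J"
  shows "\<exists>m::nat. dlen J = 2 ^ m * dlen I"
proof -
  obtain k n k' n' where I: "I = dint k n" and J: "J = dint k' n'"
    using assms dyadic_iff by metis
  have "dlen I \<le> dlen J" using assms dlen_mono dyadic_sets by blast
  hence "n' = n + int (nat (n' - n))" unfolding I J dlen_dint by simp
  hence "dlen J = 2 ^ nat (n' - n) * dlen I"
    unfolding I J dlen_dint by (metis two_powr_shift)
  thus ?thesis ..
qed

text \<open>The m-th ancestor exists and is unique, so anc m I has the defining properties.\<close>
lemma anc_props:
  assumes I: "I \<in> dyadic"
  shows "anc m I \<in> dyadic \<and> I \<subseteq> anc m I \<and> dlen (anc m I) = 2 ^ m * dlen I"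
proof -
  obtain k n where In: "I = dint k n" using I dyadic_iff by metis
  define P where "P = dint (k div 2 ^ m) (n + int m)"
  have P: "P \<in> dyadic \<and> I \<subseteq> P \<and> dlen P = 2 ^ m * dlen I"
    unfolding P_def In dyadic_iff dlen_dint two_powr_shift using dint_subset_parent by blast
  have unique: "J = P" if J: "J \<in> dyadic \<and> I \<subseteq> J \<and> dlen J = 2 ^ m * dlen I" for J
  proof -
    have "J \<inter> P \<noteq> {}" using J P dyadic_ne[OF I] by blast
    thus ?thesis using dyadic_nest[of J P] dyadic_nest[of P J] J P by (simp add: Int_commute)
  qed
  have "\<exists>!J. J \<in> dyadic \<and> I \<subseteq> J \<and> dlen J = 2 ^ m * dlen I"
    using P unique by blast
  thus ?thesis unfolding anc_def by (rule theI')
qed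

lemma anc_eq:
  assumes "I \<in> dyadic" "J \<in> dyadic" "I \<subseteq> J" "dlen J = 2 ^ m * dlen I"
  shows "J = anc m I"
proof -
  have "J \<inter> anc m I \<noteq> {}" using assms anc_props[OF assms(1)] dyadic_ne[OF assms(1)] by blast
  thus ?thesis using dyadic_nest[of J "anc m I"] dyadic_nest[of "anc m I" J] assms anc_props[OF assms(1)]
    by (simp add: Int_commute)
qed

section \<open>Formal operators\<close>

lemma fpair_single: "fpair tau [(P, c)] S = sum_list (map (\<lambda>(J, v). tau P c J v) S)"
  by (simp add: fpair_def)

lemma fpair_split:
  assumes "formal_op tau" "P \<in> dyadic" "\<forall>(J, v)\<in>set S. J \<in> dyadic"
  shows "fpair tau [(P, c)] S = fpair tau [(dleft P, c)] S + fpair tau [(dright P, c)] S"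
  using assms(3)
proof (induction S)
  case (Cons a S)
  obtain J v where a: "a = (J, v)" by fastforce
  have "J \<in> dyadic" using Cons.prems a by auto
  hence "tau P c J v = tau (dleft P) c J v + tau (dright P) c J v"
    using assms(1,2) unfolding formal_op_def by blast
  thus ?case using Cons unfolding fpair_single a by simp
qed (simp add: fpair_def)

lemma fpair_zero:
  assumes "formal_op tau" "P \<in> dyadic" "\<forall>(J, v)\<in>set S. J \<in> dyadic"
  shows "fpair tau [(P, 0)] S = 0"
  using assms(3)
proof (induction S)
  case (Cons a S)
  obtain J v where a: "a = (J, v)" by fastforce
  have "J \<in> dyadic" using Cons.prems a by auto
  hence "tau P (1 *s 0 + 0) J v = 1 * tau P 0 J v + tau P 0 J v"
    using assms(1,2) unfolding formal_op_def by blast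
  hence "tau P 0 J v = 0" by simp
  thus ?case using Cons unfolding fpair_single a by simp
qed (simp add: fpair_def)

text \<open>Proof: halve P repeatedly; at
  every step the half not containing I0 contributes nothing.\<close>
lemma fpair_localize:
  assumes tau: "formal_op tau" and S: "\<forall>(J, v)\<in>set S. J \<in> dyadic"
    and I0: "I0 \<in> dyadic" and P: "P \<in> dyadic" "I0 \<subseteq> P"
    and vanish: "\<And>K. K \<in> dyadic \<Longrightarrow> K \<subseteq> P \<Longrightarrow> K \<inter> I0 = {} \<Longrightarrow> dlen I0 \<le> dlen K \<Longrightarrow>
      fpair tau [(K, c)] S = 0"
  shows "fpair tau [(P, c)] S = fpair tau [(I0, c)] S"
proof -
  obtain m where "dlen P = 2 ^ m * dlen I0" using exists_len I0 P by blast
  with P vanish show ?thesis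
  proof (induction m arbitrary: P)
    case 0
    have "I0 = P" using dyadic_eq[OF I0 "0.prems"(1,2)] "0.prems"(4) by simp
    thus ?case by simp
  next
    case (Suc m)
    have pos: "dlen I0 > 0" using dlen_pos I0 by simp
    have "(1::real) < 2 ^ Suc m" by (rule one_less_power) simp_all
    hence "1 * dlen I0 < 2 ^ Suc m * dlen I0" using pos by (rule mult_strict_right_mono)
    hence "I0 \<noteq> P" using Suc.prems(4) by auto
    hence I0_half: "I0 \<subseteq> dleft P \<or> I0 \<subseteq> dright P" using sub_half I0 Suc.prems by blast
    have len: "dlen (dleft P) = 2 ^ m * dlen I0" "dlen (dright P) = 2 ^ m * dlen I0"
      using dlen_halves[OF Suc.prems(1)] Suc.prems(4) by auto
    have ge: "dlen I0 \<le> 2 ^ m * dlen I0" using pos by simp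
    have dy: "dleft P \<in> dyadic" "dright P \<in> dyadic"
      using Suc.prems(1) dleft_dyadic dright_dyadic by auto
    have sub: "dleft P \<subseteq> P" "dright P \<subseteq> P" using halves_sub Suc.prems(1) by auto
    have split: "fpair tau [(P, c)] S = fpair tau [(dleft P, c)] S + fpair tau [(dright P, c)] S"
      using fpair_split tau S Suc.prems(1) by blast
    from I0_half show ?case
    proof
      assume a: "I0 \<subseteq> dleft P"
      have "dright P \<inter> I0 = {}" using a halves_disj by blast
      hence "fpair tau [(dright P, c)] S = 0" using Suc.prems(3) dy sub len ge by simp
      moreover have "fpair tau [(dleft P, c)] S = fpair tau [(I0, c)] S"
        using Suc.IH[OF dy(1) a] Suc.prems(3) sub len by blast
      ultimately show ?thesis using split by simp
    next
      assume a: "I0 \<subseteq> dright P"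
      have "dleft P \<inter> I0 = {}" using a halves_disj by blast
      hence "fpair tau [(dleft P, c)] S = 0" using Suc.prems(3) dy sub len ge by simp
      moreover have "fpair tau [(dright P, c)] S = fpair tau [(I0, c)] S"
        using Suc.IH[OF dy(2) a] Suc.prems(3) sub len by blast
      ultimately show ?thesis using split by simp
    qed
  qed
qed

lemma fadj_formal:
  assumes "formal_op tau"
  shows "formal_op (fadj tau)"
  unfolding formal_op_def
proof (intro ballI conjI allI)
  fix I J assume I: "I \<in> dyadic" and J: "J \<in> dyadic"
  have lin: "tau J (a *s e + e') I v = a * tau J e I v + tau J e' I v"
    and antilin: "tau J e I (a *s v + v') = cnj a * tau J e I v + tau J e I v'"
    and split_left: "tau J e I v = tau (dleft J) e I v + tau (dright J) e I v"
    and split_right: "tau J e I v = tau J e (dleft I) v + tau J e (dright I) v" for a e e' v v'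
    using assms I J unfolding formal_op_def by blast+
  fix a e e' v v'
  show "fadj tau I (a *s e + e') J v = a * fadj tau I e J v + fadj tau I e' J v"
    "fadj tau I e J (a *s v + v') = cnj a * fadj tau I e J v + fadj tau I e J v'"
    unfolding fadj_def by (simp_all add: lin antilin)
  show "fadj tau I e J v = fadj tau (dleft I) e J v + fadj tau (dright I) e J v"
    unfolding fadj_def using split_right[of v e] by simp
  show "fadj tau I e J v = fadj tau I e (dleft J) v + fadj tau I e (dright J) v"
    unfolding fadj_def using split_left[of v e] by simp
qed

section \<open>Hermitian linear algebra\<close>

lemma cinner_add_left: "cinner (x + y) z = cinner x z + cinner y z"
  unfolding cinner_def by (simp add: algebra_simps sum.distrib)

lemma cinner_add_right: "cinner x (y + z) = cinner x y + cinner x z"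
  unfolding cinner_def by (simp add: algebra_simps sum.distrib)

lemma cinner_scale_left: "cinner (c *s x) y = c * cinner x y"
  unfolding cinner_def by (simp add: sum_distrib_left mult.assoc)

lemma cinner_scale_right: "cinner x (c *s y) = cnj c * cinner x y"
  unfolding cinner_def by (simp add: sum_distrib_left mult_ac)

lemma cinner_zero_left [simp]: "cinner 0 y = 0"
  unfolding cinner_def by simp

lemma cinner_zero_right [simp]: "cinner x 0 = 0"
  unfolding cinner_def by simp

lemma cinner_cnj: "cnj (cinner x y) = cinner y x"
  unfolding cinner_def by (simp add: mult.commute)

lemma mv_scale: "(A::complex^'n^'m) *v (c *s x) = c *s (A *v x)"
  by (simp add: vec_eq_iff matrix_vector_mult_def sum_distrib_left mult_ac)

definition selfadj :: "complex^'n^'n \<Rightarrow> bool" where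
  "selfadj M \<longleftrightarrow> (\<forall>x y. cinner (M *v x) y = cinner x (M *v y))"

lemma hermitian_selfadj: "hermitian A \<Longrightarrow> selfadj A"
proof -
  assume h: "hermitian A"
  have hc: "\<And>i j. cnj (A$j$i) = A$i$j" using h unfolding hermitian_def by (metis complex_cnj_cnj)
  { fix x y
    have "cinner (A *v x) y = (\<Sum>i\<in>UNIV. \<Sum>j\<in>UNIV. A$i$j * x$j * cnj (y$i))"
      by (simp add: cinner_def matrix_vector_mult_def sum_distrib_right)
    also have "\<dots> = (\<Sum>j\<in>UNIV. \<Sum>i\<in>UNIV. A$i$j * x$j * cnj (y$i))"
      by (rule sum.swap)
    also have "\<dots> = (\<Sum>j\<in>UNIV. \<Sum>i\<in>UNIV. x$j * cnj (A$j$i) * cnj (y$i))"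
      by (simp add: hc mult_ac)
    also have "\<dots> = cinner x (A *v y)"
      by (simp add: cinner_def matrix_vector_mult_def sum_distrib_left cnj_sum mult_ac)
    finally have "cinner (A *v x) y = cinner x (A *v y)" . }
  thus ?thesis unfolding selfadj_def by blast
qed

lemma matrix_inv_cancel:
  fixes M :: "complex^'n^'n"
  assumes "invertible M"
  shows "M *v (matrix_inv M *v x) = x" "matrix_inv M *v (M *v x) = x"
proof -
  have "\<exists>A'. M ** A' = mat 1 \<and> A' ** M = mat 1" using assms unfolding invertible_def .
  hence "M ** matrix_inv M = mat 1 \<and> matrix_inv M ** M = mat 1"
    unfolding matrix_inv_def by (rule someI_ex)
  thus "M *v (matrix_inv M *v x) = x" "matrix_inv M *v (M *v x) = x"
    by (simp_all add: matrix_vector_mul_assoc)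
qed

lemma selfadj_inv: "selfadj M \<Longrightarrow> invertible M \<Longrightarrow> selfadj (matrix_inv M)"
proof -
  assume s: "selfadj M" and i: "invertible M"
  { fix x y
    have "cinner (matrix_inv M *v x) y = cinner (matrix_inv M *v x) (M *v (matrix_inv M *v y))"
      using matrix_inv_cancel[OF i] by simp
    also have "\<dots> = cinner (M *v (matrix_inv M *v x)) (matrix_inv M *v y)"
      using s unfolding selfadj_def by simp
    also have "\<dots> = cinner x (matrix_inv M *v y)" using matrix_inv_cancel[OF i] by simp
    finally have "cinner (matrix_inv M *v x) y = cinner x (matrix_inv M *v y)" . }
  thus ?thesis unfolding selfadj_def by blast
qed

lemma posdef_invertible: "posdef (M::complex^'n^'n) \<Longrightarrow> invertible M"
proof -
  assume p: "posdef M"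
  have "\<forall>x. M *v x = 0 \<longrightarrow> x = 0"
  proof (intro allI impI)
    fix x assume "M *v x = 0"
    thus "x = 0" using p unfolding posdef_def by force
  qed
  thus ?thesis using matrix_left_invertible_ker invertible_left_inverse by blast
qed

lemma posdef_selfadj: "posdef M \<Longrightarrow> selfadj M"
  unfolding posdef_def using hermitian_selfadj by blast

lemma posdef_nonneg: "posdef M \<Longrightarrow> Re (cinner (M *v x) x) \<ge> 0"
  unfolding posdef_def by (cases "x = 0") (auto intro: less_imp_le)

text \<open>With Bp = W(J_+), Bm = W(J_-) positive
  definite and A = Bp^{-1} Bm, the matrix M = (Bm + Bp) Bp^{-1} Bm = W(J) W(J_+)^{-1} W(J_-) is
  self-adjoint and positive definite, and the quadratic form of h_J^{W,j} is governed by M (H2).\<close>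
locale haar_block =
  fixes Bp Bm :: "complex^'n^'n"
  assumes posdef_Bp: "posdef Bp" and posdef_Bm: "posdef Bm"
begin

definition "Ai = matrix_inv Bp"
definition "A = Ai ** Bm"
definition "M = (Bm + Bp) ** Ai ** Bm"

lemma invertible_Bp: "invertible Bp" using posdef_invertible posdef_Bp by blast

lemma Bp_A: "Bp *v (A *v v) = Bm *v v"
  unfolding A_def Ai_def
  by (simp add: matrix_vector_mul_assoc[symmetric] matrix_inv_cancel[OF invertible_Bp])

lemma M_apply: "M *v v = Bm *v v + Bm *v (Ai *v (Bm *v v))"
  unfolding M_def Ai_def
  by (simp add: matrix_vector_mul_assoc[symmetric] matrix_vector_mult_add_rdistrib
      matrix_inv_cancel[OF invertible_Bp])

lemma selfadj_Ai: "selfadj Ai"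
  unfolding Ai_def using selfadj_inv posdef_selfadj posdef_Bp invertible_Bp by blast

lemma selfadj_Bm: "selfadj Bm" using posdef_selfadj posdef_Bm by blast

lemma selfadj_M: "selfadj M"
  unfolding selfadj_def
proof (intro allI)
  fix x y
  have "cinner (M *v x) y = cinner (Bm *v x) y + cinner (Bm *v (Ai *v (Bm *v x))) y"
    unfolding M_apply cinner_add_left ..
  also have "\<dots> = cinner x (Bm *v y) + cinner (Ai *v (Bm *v x)) (Bm *v y)"
    using selfadj_Bm unfolding selfadj_def by simp
  also have "\<dots> = cinner x (Bm *v y) + cinner (Bm *v x) (Ai *v (Bm *v y))"
    using selfadj_Ai unfolding selfadj_def by simp
  also have "\<dots> = cinner x (Bm *v y) + cinner x (Bm *v (Ai *v (Bm *v y)))"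
    using selfadj_Bm unfolding selfadj_def by simp
  also have "\<dots> = cinner x (M *v y)" unfolding M_apply cinner_add_right ..
  finally show "cinner (M *v x) y = cinner x (M *v y)" .
qed

lemma quadratic_form:
  "cinner (Bp *v (A *v v')) (A *v v) + cinner (Bm *v v') v = cinner (M *v v') v"
proof -
  have "cinner (Bp *v (A *v v')) (A *v v) = cinner (Bm *v v') (Ai *v (Bm *v v))"
    unfolding Bp_A unfolding A_def by (simp add: matrix_vector_mul_assoc[symmetric])
  also have "\<dots> = cinner (Ai *v (Bm *v v')) (Bm *v v)"
    using selfadj_Ai unfolding selfadj_def by simp
  also have "\<dots> = cinner (Bm *v (Ai *v (Bm *v v'))) v"
    using selfadj_Bm unfolding selfadj_def by simp
  finally show ?thesis unfolding M_apply cinner_add_left by simp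
qed

lemma M_positive: "v \<noteq> 0 \<Longrightarrow> Re (cinner (M *v v) v) > 0"
proof -
  assume v: "v \<noteq> 0"
  define z where "z = Ai *v (Bm *v v)"
  have "cinner (Bm *v (Ai *v (Bm *v v))) v = cinner z (Bm *v v)"
    unfolding z_def using selfadj_Bm unfolding selfadj_def by simp
  also have "\<dots> = cinner z (Bp *v z)"
    unfolding z_def Ai_def using matrix_inv_cancel[OF invertible_Bp] by simp
  also have "\<dots> = cnj (cinner (Bp *v z) z)" by (simp add: cinner_cnj)
  finally have "Re (cinner (Bm *v (Ai *v (Bm *v v))) v) = Re (cinner (Bp *v z) z)" by simp
  moreover have "Re (cinner (Bp *v z) z) \<ge> 0" using posdef_nonneg posdef_Bp by blast
  moreover have "Re (cinner (Bm *v v) v) > 0" using posdef_Bm v unfolding posdef_def by blast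
  ultimately show ?thesis unfolding M_apply cinner_add_left by simp
qed

lemma eigenvalue_positive:
  assumes "M *v v = c *s v" "cinner v v = 1"
  shows "c = complex_of_real (Re c)" "Re c > 0"
proof -
  have cv: "cinner (M *v v) v = c" using assms by (simp add: cinner_scale_left)
  have "cinner (M *v v) v = cinner v (M *v v)" using selfadj_M unfolding selfadj_def by blast
  also have "\<dots> = cnj (cinner (M *v v) v)" by (simp add: cinner_cnj)
  finally have "c = cnj c" using cv by simp
  hence "Im c = Im (cnj c)" by (rule arg_cong)
  hence "Im c = 0" by simp
  thus "c = complex_of_real (Re c)" by (simp add: complex_eq_iff)
  have "v \<noteq> 0" using assms(2) by auto
  thus "Re c > 0" using M_positive cv by metis
qed

end

section \<open>Integrals against a matrix weight\<close>

text \<open>All functions that occur (Haar functions, weighted expectations) are step functions on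
  dyadic intervals, so every weighted integral reduces to the matrices mint W K = W(K).\<close>

lemma weight_entry_integrable:
  assumes "matrix_weight B" "K \<in> sets lborel" "K \<subseteq> I" "I \<in> dyadic"
  shows "integrable lborel (\<lambda>x. indicator K x *\<^sub>R B x $ i $ j)"
proof -
  obtain a b where ab: "I \<subseteq> {a..b}" using dyadic_bounded assms(4) by blast
  have "set_integrable lborel {a..b} (\<lambda>x. B x $ i $ j)" using assms(1) unfolding matrix_weight_def by blast
  hence "set_integrable lborel K (\<lambda>x. B x $ i $ j)"
    by (rule set_integrable_subset) (use assms(2,3) ab in auto)
  thus ?thesis unfolding set_integrable_def .
qed

lemma mint_entry: "mint B K $ i $ j = integral\<^sup>L lborel (\<lambda>x. indicator K x *\<^sub>R B x $ i $ j)"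
  unfolding mint_def set_lebesgue_integral_def by simp

lemma has_integral_cinner_weight:
  assumes "matrix_weight B" "K \<in> sets lborel" "K \<subseteq> I" "I \<in> dyadic"
  shows "has_bochner_integral lborel (\<lambda>x. indicator K x *\<^sub>R cinner (B x *v e) v) (cinner (mint B K *v e) v)"
proof -
  have eq: "(\<lambda>x. indicator K x *\<^sub>R cinner (B x *v e) v) =
     (\<lambda>x. \<Sum>i\<in>UNIV. \<Sum>j\<in>UNIV. (indicator K x *\<^sub>R B x $ i $ j) * (e$j * cnj (v$i)))"
    by (rule ext) (simp add: cinner_def matrix_vector_mult_def sum_distrib_right scaleR_sum_right
        mult_scaleR_left mult.assoc)
  have rhs: "cinner (mint B K *v e) v =
     (\<Sum>i\<in>UNIV. \<Sum>j\<in>UNIV. integral\<^sup>L lborel (\<lambda>x. indicator K x *\<^sub>R B x $ i $ j) * (e$j * cnj (v$i)))"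
    by (simp add: cinner_def matrix_vector_mult_def mint_entry sum_distrib_right mult.assoc)
  show ?thesis unfolding eq rhs
    by (intro has_bochner_integral_sum has_bochner_integral_mult_left has_bochner_integral_integrable
        weight_entry_integrable[OF assms])
qed

lemma has_integral_weight_apply:
  assumes "matrix_weight B" "K \<in> sets lborel" "K \<subseteq> I" "I \<in> dyadic"
  shows "has_bochner_integral lborel (\<lambda>x. indicator K x *\<^sub>R (B x *v e) $ i) ((mint B K *v e) $ i)"
proof -
  have eq: "(\<lambda>x. indicator K x *\<^sub>R (B x *v e) $ i) =
     (\<lambda>x. \<Sum>j\<in>UNIV. (indicator K x *\<^sub>R B x $ i $ j) * e$j)"
    by (rule ext) (simp add: matrix_vector_mult_def scaleR_sum_right mult_scaleR_left)
  have rhs: "(mint B K *v e) $ i =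
     (\<Sum>j\<in>UNIV. integral\<^sup>L lborel (\<lambda>x. indicator K x *\<^sub>R B x $ i $ j) * e$j)"
    by (simp add: matrix_vector_mult_def mint_entry)
  show ?thesis unfolding eq rhs
    by (intro has_bochner_integral_sum has_bochner_integral_mult_left has_bochner_integral_integrable
        weight_entry_integrable[OF assms])
qed

lemma step_fun_Nil[simp]: "step_fun [] x = 0"
  by (simp add: step_fun_def)

lemma step_fun_Cons: "step_fun ((I,e)#R) x = indicator I x *s e + step_fun R x"
  by (simp add: step_fun_def)

lemma has_integral_l2_step_single:
  assumes mw: "matrix_weight B" and I: "I \<in> dyadic" and S: "\<forall>(J,v)\<in>set S. J \<in> dyadic"
  shows "has_bochner_integral lborel (\<lambda>x. cinner (B x *v (indicator I x *s e)) (step_fun S x))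
     (sum_list (map (\<lambda>(J,v). cinner (mint B (I \<inter> J) *v e) v) S))"
  using S
proof (induction S)
  case Nil thus ?case by (simp add: has_bochner_integral_zero)
next
  case (Cons a S)
  obtain J v where a: "a = (J,v)" by fastforce
  have J: "J \<in> dyadic" using Cons.prems a by auto
  have eqf: "\<And>x. cinner (B x *v (indicator I x *s e)) (step_fun ((J,v)#S) x) =
     indicator (I \<inter> J) x *\<^sub>R cinner (B x *v e) v + cinner (B x *v (indicator I x *s e)) (step_fun S x)"
    by (case_tac "x \<in> I"; case_tac "x \<in> J")
      (simp_all add: step_fun_Cons cinner_add_right cinner_scale_right mv_scale cinner_scale_left)
  have A: "has_bochner_integral lborel (\<lambda>x. indicator (I \<inter> J) x *\<^sub>R cinner (B x *v e) v)
      (cinner (mint B (I \<inter> J) *v e) v)"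
    by (rule has_integral_cinner_weight[OF mw _ _ I]) (use I J dyadic_sets in auto)
  have "has_bochner_integral lborel (\<lambda>x. indicator (I \<inter> J) x *\<^sub>R cinner (B x *v e) v +
      cinner (B x *v (indicator I x *s e)) (step_fun S x))
     (cinner (mint B (I \<inter> J) *v e) v + sum_list (map (\<lambda>(J,v). cinner (mint B (I \<inter> J) *v e) v) S))"
    using has_bochner_integral_add[OF A Cons.IH] Cons.prems by simp
  thus ?case unfolding a eqf by simp
qed

lemma has_integral_l2_step:
  assumes mw: "matrix_weight B" and R: "\<forall>(I,e)\<in>set R. I \<in> dyadic" and S: "\<forall>(J,v)\<in>set S. J \<in> dyadic"
  shows "has_bochner_integral lborel (\<lambda>x. cinner (B x *v step_fun R x) (step_fun S x))
     (sum_list (map (\<lambda>(I,e). sum_list (map (\<lambda>(J,v). cinner (mint B (I \<inter> J) *v e) v) S)) R))"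
  using R
proof (induction R)
  case Nil thus ?case by (simp add: has_bochner_integral_zero)
next
  case (Cons a R)
  obtain I e where a: "a = (I,e)" by fastforce
  have I: "I \<in> dyadic" using Cons.prems a by auto
  have eqf: "\<And>x. cinner (B x *v step_fun ((I,e)#R) x) (step_fun S x) =
     cinner (B x *v (indicator I x *s e)) (step_fun S x) + cinner (B x *v step_fun R x) (step_fun S x)"
    by (simp add: step_fun_Cons matrix_vector_right_distrib cinner_add_left)
  have "has_bochner_integral lborel (\<lambda>x. cinner (B x *v (indicator I x *s e)) (step_fun S x) +
      cinner (B x *v step_fun R x) (step_fun S x))
     (sum_list (map (\<lambda>(J,v). cinner (mint B (I \<inter> J) *v e) v) S) +
      sum_list (map (\<lambda>(I,e). sum_list (map (\<lambda>(J,v). cinner (mint B (I \<inter> J) *v e) v) S)) R))"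
    using has_bochner_integral_add[OF has_integral_l2_step_single[OF mw I S] Cons.IH] Cons.prems by simp
  thus ?case unfolding a eqf by simp
qed

lemma l2ip_step:
  assumes "matrix_weight B" "\<forall>(I,e)\<in>set R. I \<in> dyadic" "\<forall>(J,v)\<in>set S. J \<in> dyadic"
  shows "l2ip B (step_fun R) (step_fun S) =
     sum_list (map (\<lambda>(I,e). sum_list (map (\<lambda>(J,v). cinner (mint B (I \<inter> J) *v e) v) S)) R)"
  unfolding l2ip_def using has_bochner_integral_integral_eq[OF has_integral_l2_step[OF assms]] .

lemma has_integral_vavg_step:
  assumes mw: "matrix_weight B" and K: "K \<in> dyadic" and R: "\<forall>(I,e)\<in>set R. I \<in> dyadic"
  shows "has_bochner_integral lborel (\<lambda>x. indicator K x *\<^sub>R (B x *v step_fun R x) $ i)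
     (sum_list (map (\<lambda>(I,e). (mint B (K \<inter> I) *v e) $ i) R))"
  using R
proof (induction R)
  case Nil thus ?case by (simp add: has_bochner_integral_zero)
next
  case (Cons a R)
  obtain I e where a: "a = (I,e)" by fastforce
  have I: "I \<in> dyadic" using Cons.prems a by auto
  have eqf: "\<And>x. indicator K x *\<^sub>R (B x *v step_fun ((I,e)#R) x) $ i =
     indicator (K \<inter> I) x *\<^sub>R (B x *v e) $ i + indicator K x *\<^sub>R (B x *v step_fun R x) $ i"
    by (case_tac "x \<in> I"; case_tac "x \<in> K")
      (simp_all add: step_fun_Cons matrix_vector_right_distrib mv_scale)
  have A: "has_bochner_integral lborel (\<lambda>x. indicator (K \<inter> I) x *\<^sub>R (B x *v e) $ i)
      ((mint B (K \<inter> I) *v e) $ i)"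
    by (rule has_integral_weight_apply[OF mw _ _ K]) (use I K dyadic_sets in auto)
  have "has_bochner_integral lborel (\<lambda>x. indicator (K \<inter> I) x *\<^sub>R (B x *v e) $ i +
      indicator K x *\<^sub>R (B x *v step_fun R x) $ i)
     ((mint B (K \<inter> I) *v e) $ i + sum_list (map (\<lambda>(I,e). (mint B (K \<inter> I) *v e) $ i) R))"
    using has_bochner_integral_add[OF A Cons.IH] Cons.prems by simp
  thus ?case unfolding a eqf by simp
qed

lemma vavg_step:
  assumes "matrix_weight B" "K \<in> dyadic" "\<forall>(I,e)\<in>set R. I \<in> dyadic"
  shows "vavg B (step_fun R) K =
    (\<chi> i. complex_of_real (1 / dlen K) * sum_list (map (\<lambda>(I,e). (mint B (K \<inter> I) *v e) $ i) R))"
  unfolding vavg_def set_lebesgue_integral_def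
  using has_bochner_integral_integral_eq[OF has_integral_vavg_step[OF assms]] by simp

lemma mint_empty[simp]: "mint B {} = 0"
  unfolding mint_def set_lebesgue_integral_def by (simp add: vec_eq_iff)

lemma mint_split:
  assumes mw: "matrix_weight B" and J: "J \<in> dyadic"
  shows "mint B J = mint B (dleft J) + mint B (dright J)"
proof -
  have dy: "dleft J \<in> dyadic" "dright J \<in> dyadic" using J dleft_dyadic dright_dyadic by auto
  have sub: "dleft J \<subseteq> J" "dright J \<subseteq> J" using halves_sub J by auto
  { fix i j
    have ind: "\<And>x. indicator J x = (indicator (dleft J) x + indicator (dright J) x :: real)"
    proof -
      fix x
      have "indicator (dleft J \<union> dright J) x = (indicator (dleft J) x + indicator (dright J) x :: real)"
        by (rule indicator_disj_union[OF halves_disj])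
      thus "indicator J x = (indicator (dleft J) x + indicator (dright J) x :: real)"
        unfolding halves_union[OF J, symmetric] .
    qed
    have "mint B J $ i $ j = integral\<^sup>L lborel (\<lambda>x. indicator (dleft J) x *\<^sub>R B x $ i $ j +
        indicator (dright J) x *\<^sub>R B x $ i $ j)"
      unfolding mint_entry ind by (simp add: scaleR_add_left)
    also have "\<dots> = mint B (dleft J) $ i $ j + mint B (dright J) $ i $ j"
      unfolding mint_entry
      by (rule Bochner_Integration.integral_add; rule weight_entry_integrable[OF mw _ _ J])
        (use dy dyadic_sets sub in auto)
    finally have "mint B J $ i $ j = (mint B (dleft J) + mint B (dright J)) $ i $ j" by simp }
  thus ?thesis by (simp add: vec_eq_iff)
qed

lemma mint_herm:
  assumes mw: "matrix_weight B" and K: "K \<in> sets lborel" "K \<subseteq> I" "I \<in> dyadic"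
  shows "hermitian (mint B K)"
proof -
  have AEh: "AE x in lborel. hermitian (B x)"
    using mw unfolding matrix_weight_def posdef_def by auto
  { fix i j
    have i1: "integrable lborel (\<lambda>x. indicator K x *\<^sub>R B x $ i $ j)" by (rule weight_entry_integrable[OF mw K])
    have i2: "integrable lborel (\<lambda>x. indicator K x *\<^sub>R B x $ j $ i)" by (rule weight_entry_integrable[OF mw K])
    have i3: "integrable lborel (\<lambda>x. cnj (indicator K x *\<^sub>R B x $ j $ i))"
      using has_bochner_integral_cnj[OF has_bochner_integral_integrable[OF i2]] integrable.intros by blast
    have ae: "AE x in lborel. indicator K x *\<^sub>R B x $ i $ j = cnj (indicator K x *\<^sub>R B x $ j $ i)"
      using AEh
    proof (rule eventually_mono)
      fix x assume "hermitian (B x)"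
      hence "B x $ i $ j = cnj (B x $ j $ i)" unfolding hermitian_def by blast
      thus "indicator K x *\<^sub>R B x $ i $ j = cnj (indicator K x *\<^sub>R B x $ j $ i)" by simp
    qed
    have "mint B K $ i $ j = integral\<^sup>L lborel (\<lambda>x. cnj (indicator K x *\<^sub>R B x $ j $ i))"
      unfolding mint_entry
      by (rule integral_cong_AE[OF borel_measurable_integrable[OF i1] borel_measurable_integrable[OF i3] ae])
    also have "\<dots> = cnj (mint B K $ j $ i)" unfolding mint_entry by (rule Bochner_Integration.integral_cnj)
    finally have "mint B K $ i $ j = cnj (mint B K $ j $ i)" . }
  thus ?thesis unfolding hermitian_def by blast
qed

text \<open>W(K) is positive definite for dyadic K, since K has positive measure.\<close>
lemma mint_posdef:
  assumes mw: "matrix_weight B" and K: "K \<in> dyadic"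
  shows "posdef (mint B K)"
proof -
  have Ks: "K \<in> sets lborel" using K dyadic_sets by blast
  have AEp: "AE t in lborel. posdef (B t)" using mw unfolding matrix_weight_def by auto
  { fix x :: "complex^'a" assume x: "x \<noteq> 0"
    define g where "g t = indicator K t * Re (cinner (B t *v x) x)" for t
    have hb: "has_bochner_integral lborel (\<lambda>t. indicator K t *\<^sub>R cinner (B t *v x) x) (cinner (mint B K *v x) x)"
      by (rule has_integral_cinner_weight[OF mw Ks _ K]) simp
    have hg: "has_bochner_integral lborel g (Re (cinner (mint B K *v x) x))"
      using has_bochner_integral_Re[OF hb] unfolding g_def by simp
    have ig: "integrable lborel g" using hg integrable.intros by blast
    have nn: "AE t in lborel. 0 \<le> g t"
      using AEp by eventually_elim (use x in \<open>auto simp: g_def posdef_def indicator_def less_imp_le\<close>)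
    have "integral\<^sup>L lborel g \<noteq> 0"
    proof
      assume "integral\<^sup>L lborel g = 0"
      hence "AE t in lborel. g t = 0" using integral_nonneg_eq_0_iff_AE[OF ig nn] by simp
      hence "AE t in lborel. t \<notin> K" using AEp
        by eventually_elim (use x in \<open>auto simp: g_def posdef_def\<close>)
      hence "emeasure lborel K = 0" using AE_iff_measurable[OF Ks, of "\<lambda>t. t \<notin> K"] by simp
      hence "dlen K = 0" unfolding dlen_def measure_def by simp
      thus False using dlen_pos[OF K] by simp
    qed
    moreover have "integral\<^sup>L lborel g \<ge> 0" using integral_nonneg_AE[OF nn] .
    ultimately have "Re (cinner (mint B K *v x) x) > 0"
      using has_bochner_integral_integral_eq[OF hg] by simp }
  thus ?thesis unfolding posdef_def using mint_herm[OF mw Ks _ K] by blast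
qed

lemma mavg_apply: "mavg B K *v x = complex_of_real (1 / dlen K) *s (mint B K *v x)"
  by (simp add: vec_eq_iff mavg_def matrix_vector_mult_def sum_distrib_left mult_ac)

lemma mavg_posdef:
  assumes mw: "matrix_weight B" and K: "K \<in> dyadic"
  shows "posdef (mavg B K)"
proof -
  have p: "posdef (mint B K)" by (rule mint_posdef[OF mw K])
  have dp: "dlen K > 0" using dlen_pos K by blast
  have hh: "\<And>i j. mint B K $ i $ j = cnj (mint B K $ j $ i)" using p unfolding posdef_def hermitian_def by blast
  have h: "hermitian (mavg B K)" unfolding hermitian_def mavg_def
  proof (intro allI)
    fix i j
    show "(\<chi> i j. complex_of_real (1 / dlen K) * mint B K $ i $ j) $ i $ j =
      cnj ((\<chi> i j. complex_of_real (1 / dlen K) * mint B K $ i $ j) $ j $ i)"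
      by (simp only: vec_lambda_beta complex_cnj_mult complex_cnj_complex_of_real hh[of i j])
  qed
  { fix x :: "complex^'a" assume x: "x \<noteq> 0"
    have "Re (cinner (mavg B K *v x) x) = (1 / dlen K) * Re (cinner (mint B K *v x) x)"
      unfolding mavg_apply cinner_scale_left by simp
    moreover have "Re (cinner (mint B K *v x) x) > 0" using p x unfolding posdef_def by blast
    ultimately have "Re (cinner (mavg B K *v x) x) > 0" using dp by simp }
  thus ?thesis unfolding posdef_def using h by blast
qed

section \<open>The weighted Haar system\<close>

definition haar_right :: "(real \<Rightarrow> complex ^ 'n ^ 'n) \<Rightarrow> (real set \<Rightarrow> 'n \<Rightarrow> complex ^ 'n) \<Rightarrow>
    real set \<Rightarrow> 'n \<Rightarrow> complex ^ 'n" where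
  "haar_right W eb J j = complex_of_real (1 / haar_norm W eb J j) *s
     ((matrix_inv (mint W (dright J)) ** mint W (dleft J)) *v eb J j)"

definition haar_left :: "(real \<Rightarrow> complex ^ 'n ^ 'n) \<Rightarrow> (real set \<Rightarrow> 'n \<Rightarrow> complex ^ 'n) \<Rightarrow>
    real set \<Rightarrow> 'n \<Rightarrow> complex ^ 'n" where
  "haar_left W eb J j = complex_of_real (- 1 / haar_norm W eb J j) *s eb J j"

lemma haar_rep_eq:
  "haar_rep W eb J j = [(dright J, haar_right W eb J j), (dleft J, haar_left W eb J j)]"
  unfolding haar_rep_def haar_right_def haar_left_def ..

lemma haar_rep_dyadic: "J \<in> dyadic \<Longrightarrow> \<forall>(K, v)\<in>set (haar_rep W eb J j). K \<in> dyadic"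
  by (simp add: haar_rep_def dleft_dyadic dright_dyadic)

lemma fpair_haar:
  "fpair tau (haar_rep A eb I i) S =
     fpair tau [(dright I, haar_right A eb I i)] S + fpair tau [(dleft I, haar_left A eb I i)] S"
  unfolding haar_rep_eq by (simp add: fpair_def)

lemma haar_block_halves:
  "matrix_weight W \<Longrightarrow> J \<in> dyadic \<Longrightarrow> haar_block (mint W (dright J)) (mint W (dleft J))"
  unfolding haar_block_def using mint_posdef dleft_dyadic dright_dyadic by blast

lemma haar_mean_zero:
  assumes mw: "matrix_weight W" and J: "J \<in> dyadic"
  shows "mint W (dright J) *v haar_right W eb J j + mint W (dleft J) *v haar_left W eb J j = 0"
proof -
  interpret haar_block "mint W (dright J)" "mint W (dleft J)" using haar_block_halves[OF mw J] .
  have "mint W (dright J) *v haar_right W eb J j =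
      complex_of_real (1 / haar_norm W eb J j) *s (mint W (dleft J) *v eb J j)"
    unfolding haar_right_def mv_scale using Bp_A unfolding A_def Ai_def by simp
  moreover have "mint W (dleft J) *v haar_left W eb J j =
      - complex_of_real (1 / haar_norm W eb J j) *s (mint W (dleft J) *v eb J j)"
    unfolding haar_left_def mv_scale by simp
  ultimately show ?thesis by (simp add: vec_eq_iff)
qed

text \<open>Equivalently (by self-adjointness of W(J_\<pm>)), h_J^{W,j} is L^2(W)-orthogonal to every
  function that is constant on J.\<close>
lemma haar_orth_const:
  assumes mw: "matrix_weight W" and J: "J \<in> dyadic"
  shows "cinner (mint W (dright J) *v c) (haar_right W eb J j) +
         cinner (mint W (dleft J) *v c) (haar_left W eb J j) = 0"
proof -
  have "selfadj (mint W (dright J))" "selfadj (mint W (dleft J))"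
    using mint_posdef[OF mw] posdef_selfadj J dleft_dyadic dright_dyadic by blast+
  hence "cinner (mint W (dright J) *v c) (haar_right W eb J j) +
         cinner (mint W (dleft J) *v c) (haar_left W eb J j) =
       cinner c (mint W (dright J) *v haar_right W eb J j + mint W (dleft J) *v haar_left W eb J j)"
    unfolding selfadj_def by (simp add: cinner_add_right)
  thus ?thesis using haar_mean_zero[OF mw J] by simp
qed

lemma l2ip_haar:
  assumes mw: "matrix_weight W" and J: "J \<in> dyadic" and J': "J' \<in> dyadic"
  shows "l2ip W (haar W eb J' j') (haar W eb J j) =
     cinner (mint W (dright J' \<inter> dright J) *v haar_right W eb J' j') (haar_right W eb J j) +
     cinner (mint W (dright J' \<inter> dleft J) *v haar_right W eb J' j') (haar_left W eb J j) +
    (cinner (mint W (dleft J' \<inter> dright J) *v haar_left W eb J' j') (haar_right W eb J j) +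
     cinner (mint W (dleft J' \<inter> dleft J) *v haar_left W eb J' j') (haar_left W eb J j))"
  unfolding haar_def using l2ip_step[OF mw haar_rep_dyadic[OF J'] haar_rep_dyadic[OF J]]
  unfolding haar_rep_eq by simp

lemma orth_disjoint:
  assumes mw: "matrix_weight W" and J: "J \<in> dyadic" and J': "J' \<in> dyadic" and d: "J' \<inter> J = {}"
  shows "l2ip W (haar W eb J' j') (haar W eb J j) = 0"
proof -
  have "dright J' \<inter> dright J = {}" "dright J' \<inter> dleft J = {}"
    "dleft J' \<inter> dright J = {}" "dleft J' \<inter> dleft J = {}"
    using d halves_sub[OF J] halves_sub[OF J'] by blast+
  thus ?thesis unfolding l2ip_haar[OF mw J J'] by simp
qed

text \<open>A Haar function is orthogonal to those of strictly larger intervals, since it has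
  W-mean zero and they are constant on its support.\<close>
lemma orth_smaller:
  assumes mw: "matrix_weight W" and J: "J \<in> dyadic" and J': "J' \<in> dyadic"
    and sub: "J' \<subseteq> J" "J' \<noteq> J"
  shows "l2ip W (haar W eb J' j') (haar W eb J j) = 0"
proof -
  have hs: "dleft J' \<subseteq> J'" "dright J' \<subseteq> J'" using halves_sub J' by auto
  have mean0: "cinner (mint W (dright J') *v haar_right W eb J' j' +
      mint W (dleft J') *v haar_left W eb J' j') c = 0" for c
    using haar_mean_zero[OF mw J'] by simp
  from sub_half[OF J' J sub] show ?thesis
  proof
    assume "J' \<subseteq> dleft J"
    hence "dright J' \<inter> dleft J = dright J'" "dleft J' \<inter> dleft J = dleft J'"
      "dright J' \<inter> dright J = {}" "dleft J' \<inter> dright J = {}" using hs halves_disj by blast+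
    thus ?thesis using mean0 unfolding l2ip_haar[OF mw J J'] by (simp add: cinner_add_left)
  next
    assume "J' \<subseteq> dright J"
    hence "dright J' \<inter> dright J = dright J'" "dleft J' \<inter> dright J = dleft J'"
      "dright J' \<inter> dleft J = {}" "dleft J' \<inter> dleft J = {}" using hs halves_disj by blast+
    thus ?thesis using mean0 unfolding l2ip_haar[OF mw J J'] by (simp add: cinner_add_left)
  qed
qed

text \<open>Symmetrically, it is orthogonal to those of strictly smaller intervals, which have
  W-mean zero on the half of J where h_J is constant.\<close>
lemma orth_larger:
  assumes mw: "matrix_weight W" and J: "J \<in> dyadic" and J': "J' \<in> dyadic"
    and sub: "J \<subseteq> J'" "J \<noteq> J'"
  shows "l2ip W (haar W eb J' j') (haar W eb J j) = 0"
proof -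
  have hs: "dleft J \<subseteq> J" "dright J \<subseteq> J" using halves_sub J by auto
  note orth = haar_orth_const[OF mw J, of _ eb j]
  from sub_half[OF J J' sub] show ?thesis
  proof
    assume "J \<subseteq> dleft J'"
    hence "dleft J' \<inter> dright J = dright J" "dleft J' \<inter> dleft J = dleft J"
      "dright J' \<inter> dright J = {}" "dright J' \<inter> dleft J = {}" using hs halves_disj by blast+
    thus ?thesis using orth unfolding l2ip_haar[OF mw J J'] by simp
  next
    assume "J \<subseteq> dright J'"
    hence "dright J' \<inter> dright J = dright J" "dright J' \<inter> dleft J = dleft J"
      "dleft J' \<inter> dright J = {}" "dleft J' \<inter> dleft J = {}" using hs halves_disj by blast+
    thus ?thesis using orth unfolding l2ip_haar[OF mw J J'] by simp
  qed
qed

lemma haar_gram: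
  assumes mw: "matrix_weight W" and J: "J \<in> dyadic"
  shows "l2ip W (haar W eb J j') (haar W eb J j) =
    complex_of_real (1 / haar_norm W eb J j' * (1 / haar_norm W eb J j)) *
      cinner (haar_mat W J *v eb J j') (eb J j)"
proof -
  interpret haar_block "mint W (dright J)" "mint W (dleft J)" using haar_block_halves[OF mw J] .
  define a' a v' v where "a' = 1 / haar_norm W eb J j'" and "a = 1 / haar_norm W eb J j"
    and "v' = eb J j'" and "v = eb J j"
  have "dright J \<inter> dleft J = {}" "dleft J \<inter> dright J = {}" using halves_disj by auto
  hence "l2ip W (haar W eb J j') (haar W eb J j) =
     cinner (mint W (dright J) *v haar_right W eb J j') (haar_right W eb J j) +
     cinner (mint W (dleft J) *v haar_left W eb J j') (haar_left W eb J j)"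
    unfolding l2ip_haar[OF mw J J] by simp
  also have "\<dots> = complex_of_real (a' * a) *
      (cinner (mint W (dright J) *v (A *v v')) (A *v v) + cinner (mint W (dleft J) *v v') v)"
  proof -
    have "- 1 / haar_norm W eb J j' = - a'" "- 1 / haar_norm W eb J j = - a"
      unfolding a_def a'_def by simp_all
    thus ?thesis
      unfolding haar_right_def haar_left_def a_def[symmetric] a'_def[symmetric] v_def[symmetric]
        v'_def[symmetric] Ai_def[symmetric] A_def[symmetric] mv_scale cinner_scale_left
        cinner_scale_right
      by (simp add: algebra_simps)
  qed
  also have "\<dots> = complex_of_real (a' * a) * cinner (M *v v') v" unfolding quadratic_form ..
  also have "M = haar_mat W J"
    unfolding haar_mat_def M_def Ai_def mint_split[OF mw J] by (simp add: add.commute)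
  finally show ?thesis unfolding a_def a'_def v_def v'_def .
qed

text \<open>Since the v_J^j form an orthonormal eigenbasis of M and w_J^j is the square root of the
  corresponding eigenvalue, the Haar functions of J are orthonormal.\<close>
lemma orth_same:
  assumes mw: "matrix_weight W" and eb: "eigbasis W eb" and J: "J \<in> dyadic"
  shows "l2ip W (haar W eb J j') (haar W eb J j) = (if j' = j then 1 else 0)"
proof -
  interpret haar_block "mint W (dright J)" "mint W (dleft J)" using haar_block_halves[OF mw J] .
  have M_eq: "haar_mat W J = M"
    unfolding haar_mat_def M_def Ai_def mint_split[OF mw J] by (simp add: add.commute)
  have onb: "cinner (eb J i) (eb J k) = (if i = k then 1 else 0)" for i k
    using eb J unfolding eigbasis_def by auto
  obtain c where c: "M *v eb J j' = c *s eb J j'"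
    using eb J M_eq unfolding eigbasis_def by metis
  show ?thesis
  proof (cases "j' = j")
    case False
    thus ?thesis unfolding haar_gram[OF mw J] M_eq c cinner_scale_left onb by simp
  next
    case True
    have "cinner (eb J j') (eb J j') = 1" using onb by simp
    hence c_pos: "c = complex_of_real (Re c)" "Re c > 0" using eigenvalue_positive[OF c] by auto
    have "haar_norm W eb J j = sqrt (Re c)"
      unfolding haar_norm_def M_eq True[symmetric] c cinner_scale_left onb by simp
    hence "1 / haar_norm W eb J j * (1 / haar_norm W eb J j) * Re c = 1"
      using c_pos(2) by (simp add: field_simps)
    hence "complex_of_real (1 / haar_norm W eb J j * (1 / haar_norm W eb J j)) * c = 1"
      by (subst c_pos(1)) (simp only: of_real_mult[symmetric] of_real_1)
    thus ?thesis unfolding haar_gram[OF mw J] M_eq c cinner_scale_left onb using True by simp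
  qed
qed

theorem haar_orthonormal:
  assumes mw: "matrix_weight W" and eb: "eigbasis W eb" and J: "J \<in> dyadic" and J': "J' \<in> dyadic"
  shows "l2ip W (haar W eb J' j') (haar W eb J j) = (if J' = J \<and> j' = j then 1 else 0)"
proof (cases "J' = J")
  case True thus ?thesis using orth_same[OF mw eb J] by simp
next
  case False
  consider "J' \<inter> J = {}" | "J' \<subseteq> J" | "J \<subseteq> J'"
    using dyadic_nest[OF J' J] dyadic_nest[OF J J'] by (metis Int_commute linorder_linear)
  thus ?thesis
    using orth_disjoint[OF mw J J'] orth_smaller[OF mw J J'] orth_larger[OF mw J J'] False
    by cases auto
qed

section \<open>The paraproduct tested against a Haar function\<close>

text \<open>The weighted expectation E_K^W h_I^{W,i} is constant on K.  Its value is that of h_I on K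
  when K lies in a half of I, and zero otherwise: then K is disjoint from I, or K contains I and
  h_I has W-mean zero.\<close>
definition haar_val :: "(real \<Rightarrow> complex ^ 'n ^ 'n) \<Rightarrow> (real set \<Rightarrow> 'n \<Rightarrow> complex ^ 'n) \<Rightarrow>
    real set \<Rightarrow> 'n \<Rightarrow> real set \<Rightarrow> complex ^ 'n" where
  "haar_val A eb I i K =
     (if K \<subseteq> dright I then haar_right A eb I i
      else if K \<subseteq> dleft I then haar_left A eb I i else 0)"

lemma haar_val_outside_halves:
  "\<not> K \<subseteq> dright I \<Longrightarrow> \<not> K \<subseteq> dleft I \<Longrightarrow> haar_val A eb I i K = 0"
  unfolding haar_val_def by simp

lemma haar_weighted_mass:
  assumes mw: "matrix_weight A" and I: "I \<in> dyadic" and K: "K \<in> dyadic"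
  shows "mint A (K \<inter> dright I) *v haar_right A eb I i + mint A (K \<inter> dleft I) *v haar_left A eb I i
       = mint A K *v haar_val A eb I i K"
proof -
  have hd: "dright I \<inter> dleft I = {}" using halves_disj by blast
  consider "K \<subseteq> dright I" | "K \<subseteq> dleft I" | "K \<inter> I = {}" | "I \<subseteq> K"
  proof -
    have "K \<inter> I = {} \<or> K \<subseteq> I \<or> I \<subseteq> K"
      using dyadic_nest[OF K I] dyadic_nest[OF I K] by (metis Int_commute linorder_linear)
    thus thesis using sub_half[OF K I] that by blast
  qed
  thus ?thesis
  proof cases
    case 1
    hence "haar_val A eb I i K = haar_right A eb I i" unfolding haar_val_def by simp
    moreover have "K \<inter> dright I = K" "K \<inter> dleft I = {}" using 1 hd by auto
    ultimately show ?thesis by simp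
  next
    case 2
    hence "\<not> K \<subseteq> dright I" using hd dyadic_ne[OF K] by blast
    hence "haar_val A eb I i K = haar_left A eb I i" unfolding haar_val_def using 2 by simp
    moreover have "K \<inter> dleft I = K" "K \<inter> dright I = {}" using 2 hd by auto
    ultimately show ?thesis by simp
  next
    case 3
    have "haar_val A eb I i K = 0"
      by (rule haar_val_outside_halves) (use 3 halves_sub[OF I] dyadic_ne[OF K] in blast)+
    moreover have "K \<inter> dleft I = {}" "K \<inter> dright I = {}" using 3 halves_sub[OF I] by auto
    ultimately show ?thesis by simp
  next
    case 4
    have ne: "dleft I \<noteq> {}" "dright I \<noteq> {}"
      using dyadic_ne dleft_dyadic dright_dyadic I by blast+
    have "haar_val A eb I i K = 0"
      by (rule haar_val_outside_halves) (use 4 halves_sub[OF I] halves_disj[of I] ne in blast)+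
    moreover have "K \<inter> dleft I = dleft I" "K \<inter> dright I = dright I" using 4 halves_sub[OF I] by auto
    ultimately show ?thesis using haar_mean_zero[OF mw I] by simp
  qed
qed

lemma vavg_haar:
  assumes mw: "matrix_weight A" and I: "I \<in> dyadic" and K: "K \<in> dyadic"
  shows "vavg A (haar A eb I i) K = mavg A K *v haar_val A eb I i K"
proof -
  have "vavg A (haar A eb I i) K = (\<chi> k. complex_of_real (1 / dlen K) *
     ((mint A (K \<inter> dright I) *v haar_right A eb I i) $ k
      + (mint A (K \<inter> dleft I) *v haar_left A eb I i) $ k))"
    using vavg_step[OF mw K haar_rep_dyadic[OF I, of A eb i]] unfolding haar_def haar_rep_eq by simp
  also have "\<dots> = complex_of_real (1 / dlen K) *s (mint A K *v haar_val A eb I i K)"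
    unfolding haar_weighted_mass[OF mw I K, symmetric] by (simp add: vec_eq_iff distrib_left)
  finally show ?thesis unfolding mavg_apply .
qed

lemma wexp_haar:
  assumes mw: "matrix_weight A" and I: "I \<in> dyadic" and K: "K \<in> dyadic"
  shows "wexp_rep A K (haar A eb I i) = [(K, haar_val A eb I i K)]"
proof -
  have "invertible (mavg A K)" using posdef_invertible mavg_posdef[OF mw K] by blast
  thus ?thesis unfolding wexp_rep_def vavg_haar[OF mw I K] using matrix_inv_cancel by simp
qed

text \<open>By orthonormality only the term J' = J, j' = j, I' = J^{(r)} of the paraproduct survives:
  <Pi h_I^i, h_J^j> = <T E_{J^{(r)}} h_I^i, h_J^j>.\<close>
lemma para_pair_haar:
  fixes ebB :: "real set \<Rightarrow> 'n \<Rightarrow> complex ^ 'n"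
  assumes mwA: "matrix_weight A" and mwB: "matrix_weight B" and ebB: "eigbasis B ebB"
    and I: "I \<in> dyadic" and J: "J \<in> dyadic"
  shows "para_pair r tau A B ebB (haar A ebA I i) J j =
     fpair tau [(anc r J, haar_val A ebA I i (anc r J))] (haar_rep B ebB J j)"
proof -
  define F where "F = (\<lambda>(I', j', J'). fpair tau (wexp_rep A I' (haar A ebA I i)) (haar_rep B ebB J' j') *
                            l2ip B (haar B ebB J' j') (haar B ebB J j))"
  define S :: "(real set \<times> 'n \<times> real set) set"
    where "S = {(I', j', J'). I' \<in> dyadic \<and> J' \<in> dyadic \<and> J' \<subseteq> I' \<and> dlen J' = dlen I' / 2 ^ r}"
  define x0 where "x0 = (anc r J, j, J)"
  have anc: "anc r J \<in> dyadic" "J \<subseteq> anc r J" "dlen (anc r J) = 2 ^ r * dlen J"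
    using anc_props[OF J] by auto
  have "x0 \<in> S" unfolding x0_def S_def using anc J by auto
  moreover have "F x = 0" if x: "x \<in> S - {x0}" for x
  proof -
    obtain I' j' J' where x_eq: "x = (I', j', J')" by (cases x) auto
    have m: "I' \<in> dyadic" "J' \<in> dyadic" "J' \<subseteq> I'" "dlen J' = dlen I' / 2 ^ r"
      using x unfolding x_eq S_def by auto
    have "\<not> (J' = J \<and> j' = j)"
    proof
      assume a: "J' = J \<and> j' = j"
      hence "I' = anc r J" using anc_eq[OF J m(1)] m(3,4) by simp
      thus False using x a unfolding x_eq x0_def by simp
    qed
    hence "l2ip B (haar B ebB J' j') (haar B ebB J j) = 0"
      using haar_orthonormal[OF mwB ebB J m(2)] by simp
    thus ?thesis unfolding x_eq F_def by simp
  qed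
  ultimately have "infsum F S = F x0"
    using infsum_cong_neutral[of "{x0}" S F F] by auto
  also have "\<dots> = fpair tau [(anc r J, haar_val A ebA I i (anc r J))] (haar_rep B ebB J j)"
    unfolding F_def x0_def using haar_orthonormal[OF mwB ebB J J] wexp_haar[OF mwA I anc(1)] by simp
  finally show ?thesis unfolding para_pair_def F_def S_def .
qed

section \<open>Consequences of lower triangularity\<close>

lemma lower_tri_vanish:
  assumes lt: "lower_tri r tau B ebB" and K: "K \<in> dyadic" and J: "J \<in> dyadic"
    and long: "dlen (anc r J) \<le> dlen K" and not_sub: "\<not> J \<subseteq> K"
  shows "fpair tau [(K, c)] (haar_rep B ebB J j) = 0"
proof -
  have p: "(2::real) ^ r > 0" "(1::real) \<le> 2 ^ r" by simp_all
  have len: "2 ^ r * dlen J \<le> dlen K" using long anc_props[OF J] by simp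
  hence "dlen J \<le> dlen K / 2 ^ r" by (simp add: pos_le_divide_eq[OF p(1)] mult.commute)
  moreover have "dlen J \<le> 2 * dlen K"
    using len mult_right_mono[OF p(2) less_imp_le[OF dlen_pos[OF J]]] dlen_pos[OF J] by linarith
  ultimately show ?thesis using lt K J not_sub unfolding lower_tri_def by blast
qed

lemma fpair_to_anc:
  assumes tau: "formal_op tau" and lt: "lower_tri r tau B ebB"
    and J: "J \<in> dyadic" and H: "H \<in> dyadic" "anc r J \<subseteq> H"
  shows "fpair tau [(H, c)] (haar_rep B ebB J j) = fpair tau [(anc r J, c)] (haar_rep B ebB J j)"
proof (rule fpair_localize[OF tau haar_rep_dyadic[OF J] _ H])
  show "anc r J \<in> dyadic" using anc_props[OF J] by blast
  fix K assume K: "K \<in> dyadic" "K \<inter> anc r J = {}" "dlen (anc r J) \<le> dlen K"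
  have "\<not> J \<subseteq> K" using K(2) anc_props[OF J] dyadic_ne[OF J] by blast
  thus "fpair tau [(K, c)] (haar_rep B ebB J j) = 0" using lower_tri_vanish[OF lt K(1) J K(3)] by blast
qed

text \<open>Case |J| \<ge> 2^{-r} |I|: then J^{(r)} is at least as long as I, so it lies in no half of I and
  the weighted expectation of h_I on it vanishes.\<close>
lemma para_pair_coarse:
  assumes tau: "formal_op tau" and mwA: "matrix_weight A" and mwB: "matrix_weight B"
    and ebB: "eigbasis B ebB" and I: "I \<in> dyadic" and J: "J \<in> dyadic"
    and coarse: "dlen I / 2 ^ r \<le> dlen J"
  shows "para_pair r tau A B ebB (haar A ebA I i) J j = 0"
proof -
  have anc: "anc r J \<in> dyadic" "dlen (anc r J) = 2 ^ r * dlen J" using anc_props[OF J] by auto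
  have "dlen I \<le> dlen J * 2 ^ r" using coarse by (simp add: pos_divide_le_eq)
  hence long: "dlen I \<le> dlen (anc r J)" unfolding anc(2) by (simp only: mult.commute)
  have not_in_half: "\<not> anc r J \<subseteq> H" if H: "H \<in> dyadic" "dlen H = dlen I / 2" for H
  proof
    assume "anc r J \<subseteq> H"
    hence "dlen (anc r J) \<le> dlen H" using dlen_mono H(1) dyadic_sets[OF anc(1)] by blast
    thus False using long H(2) dlen_pos[OF I] by simp
  qed
  have "haar_val A ebA I i (anc r J) = 0"
    by (rule haar_val_outside_halves; rule not_in_half)
      (simp_all add: dleft_dyadic[OF I] dright_dyadic[OF I] dlen_halves[OF I])
  thus ?thesis unfolding para_pair_haar[OF mwA mwB ebB I J]
    using fpair_zero[OF tau anc(1) haar_rep_dyadic[OF J]] by simp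
qed

lemma para_pair_fine_outside:
  assumes tau: "formal_op tau" and lt: "lower_tri r tau B ebB"
    and mwA: "matrix_weight A" and mwB: "matrix_weight B" and ebB: "eigbasis B ebB"
    and I: "I \<in> dyadic" and J: "J \<in> dyadic"
    and halves_long: "dlen (anc r J) \<le> dlen I / 2" and not_sub: "\<not> J \<subseteq> I"
  shows "para_pair r tau A B ebB (haar A ebA I i) J j = 0"
    and "fpair tau (haar_rep A ebA I i) (haar_rep B ebB J j) = 0"
proof -
  have anc: "anc r J \<in> dyadic" "J \<subseteq> anc r J" using anc_props[OF J] by auto
  have out: "\<not> J \<subseteq> dright I" "\<not> J \<subseteq> dleft I" using not_sub halves_sub[OF I] by auto
  hence "haar_val A ebA I i (anc r J) = 0" using anc(2) haar_val_outside_halves by blast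
  thus "para_pair r tau A B ebB (haar A ebA I i) J j = 0"
    unfolding para_pair_haar[OF mwA mwB ebB I J]
    using fpair_zero[OF tau anc(1) haar_rep_dyadic[OF J]] by simp
  show "fpair tau (haar_rep A ebA I i) (haar_rep B ebB J j) = 0"
    unfolding fpair_haar
    using lower_tri_vanish[OF lt dright_dyadic[OF I] J _ out(1)]
      lower_tri_vanish[OF lt dleft_dyadic[OF I] J _ out(2)] halves_long dlen_halves[OF I] by simp
qed

text \<open>Case |J| < 2^{-r} |I| and J \<subseteq> I: J^{(r)} lies in one half of I; the other half does not
  contain J and is long enough to be annihilated, and on the half containing J^{(r)} the operator
  only sees J^{(r)}.\<close>
lemma para_pair_fine_inside:
  assumes tau: "formal_op tau" and lt: "lower_tri r tau B ebB"
    and mwA: "matrix_weight A" and mwB: "matrix_weight B" and ebB: "eigbasis B ebB"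
    and I: "I \<in> dyadic" and J: "J \<in> dyadic"
    and shorter: "dlen (anc r J) < dlen I" and sub: "J \<subseteq> I"
  shows "para_pair r tau A B ebB (haar A ebA I i) J j = fpair tau (haar_rep A ebA I i) (haar_rep B ebB J j)"
proof -
  have anc: "anc r J \<in> dyadic" "J \<subseteq> anc r J" using anc_props[OF J] by auto
  have long: "dlen (anc r J) \<le> dlen (dleft I)" "dlen (anc r J) \<le> dlen (dright I)"
    using dlen_lt2[OF I anc(1) shorter] dlen_halves[OF I] by auto
  have "anc r J \<inter> I \<noteq> {}" using sub anc(2) dyadic_ne[OF J] by blast
  hence "anc r J \<subseteq> I" "anc r J \<noteq> I"
    using dyadic_nest[OF anc(1) I] shorter by auto
  hence "anc r J \<subseteq> dleft I \<or> anc r J \<subseteq> dright I" using sub_half[OF anc(1) I] by blast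
  thus ?thesis
  proof
    assume a: "anc r J \<subseteq> dleft I"
    have "\<not> anc r J \<subseteq> dright I" using a halves_disj dyadic_ne[OF anc(1)] by blast
    hence "haar_val A ebA I i (anc r J) = haar_left A ebA I i" unfolding haar_val_def using a by simp
    moreover have "\<not> J \<subseteq> dright I" using a anc(2) halves_disj dyadic_ne[OF J] by blast
    ultimately show ?thesis
      unfolding para_pair_haar[OF mwA mwB ebB I J] fpair_haar
        fpair_to_anc[OF tau lt J dleft_dyadic[OF I] a]
      using lower_tri_vanish[OF lt dright_dyadic[OF I] J long(2)] by simp
  next
    assume a: "anc r J \<subseteq> dright I"
    hence "haar_val A ebA I i (anc r J) = haar_right A ebA I i" unfolding haar_val_def by simp
    moreover have "\<not> J \<subseteq> dleft I" using a anc(2) halves_disj dyadic_ne[OF J] by blast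
    ultimately show ?thesis
      unfolding para_pair_haar[OF mwA mwB ebB I J] fpair_haar
        fpair_to_anc[OF tau lt J dright_dyadic[OF I] a]
      using lower_tri_vanish[OF lt dleft_dyadic[OF I] J long(1)] by simp
  qed
qed

theorem para_pair_haar_coefficients:
  assumes tau: "formal_op tau" and lt: "lower_tri r tau B ebB"
    and mwA: "matrix_weight A" and mwB: "matrix_weight B" and ebB: "eigbasis B ebB"
    and I: "I \<in> dyadic" and J: "J \<in> dyadic"
  shows "(dlen J \<ge> dlen I / 2 ^ r \<longrightarrow> para_pair r tau A B ebB (haar A ebA I i) J j = 0) \<and>
     (dlen J < dlen I / 2 ^ r \<longrightarrow>
        para_pair r tau A B ebB (haar A ebA I i) J j = fpair tau (haar_rep A ebA I i) (haar_rep B ebB J j) \<and>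
        (\<not> J \<subseteq> I \<longrightarrow> para_pair r tau A B ebB (haar A ebA I i) J j = 0 \<and>
           fpair tau (haar_rep A ebA I i) (haar_rep B ebB J j) = 0))"
proof (intro conjI impI)
  show "dlen I / 2 ^ r \<le> dlen J \<Longrightarrow> para_pair r tau A B ebB (haar A ebA I i) J j = 0"
    using para_pair_coarse[OF tau mwA mwB ebB I J] by blast
  assume fine: "dlen J < dlen I / 2 ^ r"
  have anc: "anc r J \<in> dyadic" "dlen (anc r J) = 2 ^ r * dlen J" using anc_props[OF J] by auto
  have "dlen J * 2 ^ r < dlen I" using fine by (simp add: pos_less_divide_eq)
  hence shorter: "dlen (anc r J) < dlen I" unfolding anc(2) by (simp only: mult.commute)
  hence halves_long: "dlen (anc r J) \<le> dlen I / 2" using dlen_lt2[OF I anc(1)] by simp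
  note outside = para_pair_fine_outside[OF tau lt mwA mwB ebB I J halves_long]
  show "para_pair r tau A B ebB (haar A ebA I i) J j = fpair tau (haar_rep A ebA I i) (haar_rep B ebB J j)"
    using para_pair_fine_inside[OF tau lt mwA mwB ebB I J shorter] outside by (cases "J \<subseteq> I") simp_all
  show "\<not> J \<subseteq> I \<Longrightarrow> para_pair r tau A B ebB (haar A ebA I i) J j = 0"
    "\<not> J \<subseteq> I \<Longrightarrow> fpair tau (haar_rep A ebA I i) (haar_rep B ebB J j) = 0"
    using outside by blast+
qed

theorem lemma5p1:
  fixes W V :: "real \<Rightarrow> complex ^ 'n ^ 'n"
    and ebW ebV :: "real set \<Rightarrow> 'n \<Rightarrow> complex ^ 'n"
    and tau :: "real set \<Rightarrow> complex ^ 'n \<Rightarrow> real set \<Rightarrow> complex ^ 'n \<Rightarrow> complex"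
    and r :: nat and I J :: "real set" and i j :: 'n
  assumes "matrix_weight W" and "matrix_weight V"
    and "eigbasis W ebW" and "eigbasis V ebV"
    and "formal_op tau"
    and "well_localized r tau W ebW V ebV"
    and "I \<in> dyadic" and "J \<in> dyadic"
  shows
    "(dlen J \<ge> dlen I / 2 ^ r \<longrightarrow>
        para_pair r tau W V ebV (haar W ebW I i) J j = 0) \<and>
     (dlen J < dlen I / 2 ^ r \<longrightarrow>
        para_pair r tau W V ebV (haar W ebW I i) J j
          = fpair tau (haar_rep W ebW I i) (haar_rep V ebV J j) \<and>
        (\<not> J \<subseteq> I \<longrightarrow>
          para_pair r tau W V ebV (haar W ebW I i) J j = 0 \<and>
          fpair tau (haar_rep W ebW I i) (haar_rep V ebV J j) = 0)) \<and>
     (dlen J \<ge> dlen I / 2 ^ r \<longrightarrow>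
        para_pair r (fadj tau) V W ebW (haar V ebV I i) J j = 0) \<and>
     (dlen J < dlen I / 2 ^ r \<longrightarrow>
        para_pair r (fadj tau) V W ebW (haar V ebV I i) J j
          = fpair (fadj tau) (haar_rep V ebV I i) (haar_rep W ebW J j) \<and>
        (\<not> J \<subseteq> I \<longrightarrow>
          para_pair r (fadj tau) V W ebW (haar V ebV I i) J j = 0 \<and>
          fpair (fadj tau) (haar_rep V ebV I i) (haar_rep W ebW J j) = 0))"
proof -
  have lt_tau: "lower_tri r tau V ebV" and lt_adj: "lower_tri r (fadj tau) W ebW"
    using assms(6) unfolding well_localized_def by auto
  show ?thesis
    using para_pair_haar_coefficients[OF assms(5) lt_tau assms(1,2,4,7,8), of ebW i j]
      para_pair_haar_coefficients[OF fadj_formal[OF assms(5)] lt_adj assms(2,1,3,7,8), of ebV i j]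
    by blast
qed

end
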